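(* Let $\mathbb{F}$ be a field of characteristic $p>0$. Let $P(t,y)\in\mathbb{F}[[t,y]]$ and $\varphi(t)\in\mathbb{F}[[t]]$ satisfy $$P(t,y)=(y-\varphi(t))^{p^{\ell}e}\cdot Q(t,y)$$ for some $Q\in\mathbb{F}[[t,y]]$, $\ell\ge0$ and $e\ge1$ with $\gcd(p,e)=1$. If $\varphi(0)=0$ and $Q(0,0)\neq0$, then $$\varphi(t)^{p^{\ell}}=\mathcal{D}\left(\frac{y^{2p^{\ell}}\cdot \big(\mathcal{H}^{(p^{\ell})}_y P\big)(ty,y)}{e\cdot P(ty,y)}\right),$$ where the quotient is an element of $\mathbb{F}[[t,y]]$.
   Context: For a bivariate power series $F(t,y)=\sum_{i,j\ge0}F_{i,j}t^iy^j$, the diagonal operator is $\mathcal{D}(F)(t)=\sum_{i\ge0}F_{i,i}t^i$. The Hasse derivative of order $i$ with respect to $y$, $\mathcal{H}^{(i)}_y(F)$, is the coefficient of $z^i$ in $F(t,y+z)$ (viewed as a power series in $z$ with coefficients in $\mathbb{F}[[t,y]]$). *)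

theory Defs
  imports "HOL-Computational_Algebra.Formal_Power_Series"
begin

text \<open>Bivariate power series in F[[t,y]] are represented as elements of
  (F[[t]])[[y]], i.e. of type 'a fps fps: the outer variable is y, the inner one t.\<close>

definition bcoeff :: "'a fps fps \<Rightarrow> nat \<Rightarrow> nat \<Rightarrow> 'a" where
  "bcoeff F i j = fps_nth (fps_nth F j) i"

definition bivar :: "(nat \<Rightarrow> nat \<Rightarrow> 'a) \<Rightarrow> 'a fps fps" where
  "bivar f = Abs_fps (\<lambda>j. Abs_fps (\<lambda>i. f i j))"

definition diag :: "'a fps fps \<Rightarrow> 'a fps" where
  "diag F = Abs_fps (\<lambda>i. bcoeff F i i)"

text \<open>Substitution F(t,y) |-> F(t*y, y): the monomial t^a y^b goes to t^a y^(a+b).\<close>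
definition subst_ty :: "'a::zero fps fps \<Rightarrow> 'a fps fps" where
  "subst_ty F = bivar (\<lambda>i j. if i \<le> j then bcoeff F i (j - i) else 0)"

text \<open>Hasse derivative of order k w.r.t. y: coefficient of z^k in F(t,y+z).
  Since (y+z)^b = sum_k (b choose k) y^(b-k) z^k, its coefficient of t^a y^c
  is (c+k choose k) * F_{a,c+k}.\<close>
definition hasse_y :: "nat \<Rightarrow> 'a::comm_semiring_1 fps fps \<Rightarrow> 'a fps fps" where
  "hasse_y k F = bivar (\<lambda>a c. of_nat ((c + k) choose k) * bcoeff F a (c + k))"

end

theory Submission
  imports Defs
begin

text \<open>Write q = p^l. The Frobenius turns the factorisation into P = A^e Q with A = y^q - \<phi>^q.
  Since (n choose q) = \<lfloor>n/q\<rfloor> modulo p, the Hasse derivative H of order q satisfies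
  H(y^q G) = y^q H(G) + G, so on powers of A it behaves like a derivation with H(A) = 1 and
  H(P)/(e P) = 1/A + H(Q)/(e Q). After the substitution t \<mapsto> ty, y^(2q) times the second summand only
  has monomials t^a y^b with a < b and misses the diagonal, while y^(2q)/A(ty,y) = y^q/(1 - \<Psi>^q) with
  \<Psi> = \<phi>(ty)/y divisible by t, whose diagonal is \<phi>^q. The quotient is unique because F[[t,y]] is
  an integral domain.\<close>

unbundle fps_syntax

lemma bcoeff_bivar [simp]: "bcoeff (bivar f) i j = f i j"
  by (simp add: bcoeff_def bivar_def)

lemma bcoeff_ext: "(\<And>a b. bcoeff F a b = bcoeff G a b) \<Longrightarrow> F = G"
  by (auto simp: bcoeff_def intro!: fps_ext)

lemma bcoeff_mult:
  "bcoeff (F * G) a b = (\<Sum>j=0..b. \<Sum>i=0..a. bcoeff F i j * bcoeff G (a - i) (b - j))"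
  by (simp add: bcoeff_def fps_mult_nth fps_sum_nth)

lemma bcoeff_add [simp]: "bcoeff (F + G) a b = bcoeff F a b + bcoeff G a b"
  by (simp add: bcoeff_def)

lemma bcoeff_diff [simp]: "bcoeff (F - G) a b = bcoeff F a b - bcoeff G a b"
  by (simp add: bcoeff_def)

lemma bcoeff_zero [simp]: "bcoeff 0 a b = 0"
  by (simp add: bcoeff_def)

lemma bcoeff_one [simp]: "bcoeff 1 a b = (if a = 0 \<and> b = 0 then 1 else 0)"
  by (simp add: bcoeff_def)

lemma bcoeff_const [simp]: "bcoeff (fps_const c) a b = (if b = 0 then c $ a else 0)"
  by (simp add: bcoeff_def)

lemma bcoeff_X: "bcoeff (fps_X :: 'a::comm_semiring_1 fps fps) a b = (if a = 0 \<and> b = 1 then 1 else 0)"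
  by (simp add: bcoeff_def fps_X_def)

lemma bcoeff_X_power_mult: "bcoeff (fps_X ^ k * G) a b = (if b < k then 0 else bcoeff G a (b - k))"
  by (simp add: bcoeff_def fps_X_power_mult_nth)

definition fps_swap :: "'a fps fps \<Rightarrow> 'a fps fps" where
  "fps_swap F = bivar (\<lambda>i j. bcoeff F j i)"

lemma bcoeff_fps_swap [simp]: "bcoeff (fps_swap F) a b = bcoeff F b a"
  by (simp add: fps_swap_def)

lemma fps_swap_mult: "fps_swap (F * G :: 'a::comm_semiring_1 fps fps) = fps_swap F * fps_swap G"
  by (rule bcoeff_ext) (simp only: bcoeff_mult bcoeff_fps_swap, rule sum.swap)

text \<open>The substitution F(t,y) \<mapsto> F(t,ty).\<close>
definition subst_yt :: "'a::comm_semiring_1 fps fps \<Rightarrow> 'a fps fps" where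
  "subst_yt F = Abs_fps (\<lambda>n. fps_X ^ n * F $ n)"

lemma bcoeff_subst_yt: "bcoeff (subst_yt F) a b = (if b \<le> a then bcoeff F (a - b) b else 0)"
  by (simp add: subst_yt_def bcoeff_def fps_X_power_mult_nth)

lemma subst_yt_mult: "subst_yt (F * G) = subst_yt F * subst_yt G"
proof (rule fps_ext)
  fix n
  have "fps_X ^ n * (F * G) $ n = (\<Sum>i=0..n. (fps_X ^ i * F $ i) * (fps_X ^ (n - i) * G $ (n - i)))"
    by (simp add: fps_mult_nth sum_distrib_left mult_ac flip: power_add)
  then show "subst_yt (F * G) $ n = (subst_yt F * subst_yt G) $ n"
    by (simp add: subst_yt_def fps_mult_nth)
qed

lemma subst_yt_one: "subst_yt 1 = 1"
  by (rule bcoeff_ext) (simp add: bcoeff_subst_yt)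

lemma subst_yt_add: "subst_yt (F + G) = subst_yt F + subst_yt G"
  by (rule bcoeff_ext) (simp add: bcoeff_subst_yt)

lemma subst_yt_diff: "subst_yt (F - G :: 'a::comm_ring_1 fps fps) = subst_yt F - subst_yt G"
  by (rule bcoeff_ext) (simp add: bcoeff_subst_yt)

lemma subst_yt_power: "subst_yt (F ^ n) = subst_yt F ^ n"
  by (induction n) (simp_all add: subst_yt_one subst_yt_mult)

lemma subst_ty_conv_subst_yt: "subst_ty F = fps_swap (subst_yt (fps_swap F))"
  by (rule bcoeff_ext) (simp add: subst_ty_def bcoeff_subst_yt)

lemma subst_ty_mult: "subst_ty (F * G :: 'a::comm_semiring_1 fps fps) = subst_ty F * subst_ty G"
  by (simp add: subst_ty_conv_subst_yt fps_swap_mult subst_yt_mult)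

lemma bcoeff_subst_ty: "bcoeff (subst_ty F) a b = (if a \<le> b then bcoeff F a (b - a) else 0)"
  by (simp add: subst_ty_def)

lemma subst_ty_zero: "subst_ty 0 = 0"
  by (rule bcoeff_ext) (simp add: bcoeff_subst_ty)

lemma subst_ty_add: "subst_ty (F + G :: 'a::comm_semiring_1 fps fps) = subst_ty F + subst_ty G"
  by (rule bcoeff_ext) (simp add: subst_ty_def)

lemma subst_ty_diff: "subst_ty (F - G :: 'a::comm_ring_1 fps fps) = subst_ty F - subst_ty G"
  by (rule bcoeff_ext) (simp add: subst_ty_def)

lemma subst_ty_one: "subst_ty (1 :: 'a::comm_semiring_1 fps fps) = 1"
  by (rule bcoeff_ext) (simp add: subst_ty_def)

lemma subst_ty_X: "subst_ty (fps_X :: 'a::comm_semiring_1 fps fps) = fps_X"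
  by (rule bcoeff_ext) (auto simp: bcoeff_subst_ty bcoeff_X)

lemma subst_ty_power: "subst_ty (F ^ n :: 'a::comm_semiring_1 fps fps) = subst_ty F ^ n"
  by (induction n) (simp_all add: subst_ty_one subst_ty_mult)

lemma subst_ty_of_nat: "subst_ty (of_nat n :: 'a::comm_semiring_1 fps fps) = of_nat n"
  by (induction n) (simp_all add: subst_ty_zero subst_ty_one subst_ty_add)

lemma subst_ty_eq_0_iff: "subst_ty F = 0 \<longleftrightarrow> F = 0"
proof
  assume "subst_ty F = 0"
  then have "bcoeff F a b = 0" for a b
    using bcoeff_subst_ty[of F a "a + b"] by simp
  then show "F = 0"
    by (intro bcoeff_ext) simp
qed (rule bcoeff_ext, simp add: bcoeff_subst_ty)

lemma diag_add: "diag (F + G) = diag F + diag G"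
  by (rule fps_ext) (simp add: diag_def)

lemma diag_subst_yt: "diag (subst_yt F) = Abs_fps (\<lambda>n. bcoeff F 0 n)"
  by (rule fps_ext) (simp add: diag_def bcoeff_subst_yt)

text \<open>On series of the form F(t,ty), the diagonal is the restriction to t = 0, a ring homomorphism.\<close>
lemma diag_subst_yt_mult: "diag (subst_yt (F * G)) = diag (subst_yt F) * diag (subst_yt G)"
  by (rule fps_ext) (simp add: diag_subst_yt bcoeff_def fps_mult_nth fps_sum_nth)

lemma diag_one: "diag 1 = 1"
  by (rule fps_ext) (simp add: diag_def)

lemma diag_subst_yt_power: "diag (subst_yt (F ^ n)) = diag (subst_yt F) ^ n"
  by (induction n) (simp_all add: diag_subst_yt_mult subst_yt_one diag_one)

lemma diag_X_power_mult_subst_ty: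
  assumes "k > 0"
  shows "diag (fps_X ^ k * subst_ty F) = 0"
  using assms by (intro fps_ext) (auto simp: diag_def bcoeff_X_power_mult bcoeff_subst_ty)

lemma subst_ty_const_conv_subst_yt:
  "subst_ty (fps_const c) = subst_yt (bivar (\<lambda>i j. if i = 0 then c $ j else 0))"
  by (rule bcoeff_ext) (simp add: bcoeff_subst_ty bcoeff_subst_yt)

lemma diag_subst_ty_const_mult: "diag (subst_ty (fps_const c) * subst_yt F) = c * diag (subst_yt F)"
proof -
  have "diag (subst_yt (bivar (\<lambda>i j. if i = 0 then c $ j else 0))) = c"
    by (rule fps_ext) (simp add: diag_subst_yt)
  then show ?thesis
    by (simp add: subst_ty_const_conv_subst_yt diag_subst_yt_mult flip: subst_yt_mult)
qed

text \<open>\<phi>(ty) = y \<Psi>(t,ty) with \<Psi>(t,y) = t \<phi>(y)/y, a multiple of t.\<close>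
lemma subst_ty_const_factor:
  assumes "\<phi> $ 0 = 0"
  obtains \<Psi> where "subst_ty (fps_const \<phi>) = fps_X * subst_yt \<Psi>" and "diag (subst_yt \<Psi>) = 0"
proof
  let ?\<Psi> = "bivar (\<lambda>i j. if i = 1 then \<phi> $ Suc j else 0)"
  show "subst_ty (fps_const \<phi>) = fps_X * subst_yt ?\<Psi>"
    using assms by (intro bcoeff_ext) (auto simp: bcoeff_X_power_mult[of 1, simplified] bcoeff_subst_yt bcoeff_subst_ty)
  show "diag (subst_yt ?\<Psi>) = 0"
    by (rule fps_ext) (simp add: diag_subst_yt)
qed

lemma bivariate_right_inverse:
  fixes F :: "'a::field fps fps"
  assumes "bcoeff F 0 0 \<noteq> 0"
  obtains G where "F * G = 1"
proof -
  have "F $ 0 * inverse (F $ 0) = 1"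
    using assms by (simp add: bcoeff_def inverse_mult_eq_1')
  then show thesis
    using fps_right_inverse that by blast
qed

lemma diag_subst_yt_inverse:
  fixes G J :: "'a::comm_ring_1 fps fps"
  assumes "(1 - G) * J = 1" and "diag (subst_yt G) = 0"
  shows "diag (subst_yt J) = 1"
proof -
  from assms(1) have "J = 1 + G * J"
    by (simp add: algebra_simps)
  then have "diag (subst_yt J) = diag (subst_yt (1 + G * J))"
    by (rule arg_cong)
  with assms(2) show ?thesis
    by (simp add: subst_yt_add subst_yt_one diag_add diag_one diag_subst_yt_mult)
qed

text \<open>y^(2q) / (y^q - \<phi>(ty)^q) = y^q / (1 - \<Psi>^q) = y^q + \<phi>(ty)^q / (1 - \<Psi>^q), and on the
  diagonal the geometric series 1/(1 - \<Psi>^q) contributes only its constant term.\<close>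
lemma diag_root_quotient:
  fixes \<phi> :: "'a::field fps"
  assumes q: "q > 0" and \<phi>0: "\<phi> $ 0 = 0"
  obtains R where "(fps_X ^ q - subst_ty (fps_const (\<phi> ^ q))) * R = fps_X ^ (2 * q)"
    and "diag R = \<phi> ^ q"
proof -
  obtain \<Psi> where \<Psi>: "subst_ty (fps_const \<phi>) = fps_X * subst_yt \<Psi>" and "diag (subst_yt \<Psi>) = 0"
    using \<phi>0 by (rule subst_ty_const_factor)
  then have diag_\<Psi>: "diag (subst_yt (\<Psi> ^ q)) = 0"
    using q by (simp add: diag_subst_yt_power power_0_left)
  then have "bcoeff (1 - \<Psi> ^ q) 0 0 \<noteq> 0"
    by (simp add: fps_eq_iff diag_subst_yt)
  then obtain J where J: "(1 - \<Psi> ^ q) * J = 1"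
    by (rule bivariate_right_inverse)
  have subst_\<phi>q: "subst_ty (fps_const (\<phi> ^ q)) = fps_X ^ q * subst_yt (\<Psi> ^ q)"
    by (simp add: \<Psi> subst_ty_power subst_yt_power power_mult_distrib flip: fps_const_power)
  show thesis
  proof
    have "(fps_X ^ q - subst_ty (fps_const (\<phi> ^ q))) * (fps_X ^ q * subst_yt J)
        = fps_X ^ q * fps_X ^ q * subst_yt ((1 - \<Psi> ^ q) * J)"
      by (simp add: subst_\<phi>q subst_yt_mult subst_yt_diff subst_yt_one algebra_simps)
    also have "\<dots> = fps_X ^ (2 * q)"
      by (simp add: J subst_yt_one mult_2 power_add)
    finally show "(fps_X ^ q - subst_ty (fps_const (\<phi> ^ q))) * (fps_X ^ q * subst_yt J) = fps_X ^ (2 * q)" .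
  next
    have "subst_yt J = 1 + subst_yt (\<Psi> ^ q) * subst_yt J"
      using arg_cong[OF J, of subst_yt]
      by (simp add: subst_yt_mult subst_yt_diff subst_yt_one left_diff_distrib diff_eq_eq)
    then have "fps_X ^ q * subst_yt J = fps_X ^ q * (1 + subst_yt (\<Psi> ^ q) * subst_yt J)"
      by (rule arg_cong)
    also have "\<dots> = fps_X ^ q * subst_ty 1 + subst_ty (fps_const (\<phi> ^ q)) * subst_yt J"
      by (simp add: subst_\<phi>q subst_ty_one algebra_simps)
    finally show "diag (fps_X ^ q * subst_yt J) = \<phi> ^ q"
      using q diag_subst_yt_inverse[OF J diag_\<Psi>]
      by (simp add: diag_add diag_X_power_mult_subst_ty diag_subst_ty_const_mult)
  qed
qed

lemma freshmans_dream_diff: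
  fixes x y :: "'a::comm_ring_1"
  assumes "prime CHAR('a)" and "m = CHAR('a) ^ n"
  shows "(x - y) ^ m = x ^ m - y ^ m"
proof -
  have "x ^ m = ((x - y) + y) ^ m"
    by simp
  also have "\<dots> = (x - y) ^ m + y ^ m"
    using assms by (rule freshmans_dream')
  finally show ?thesis
    by simp
qed

lemma fps_nth_one_plus_X_power: "((1 + fps_X :: 'a::comm_semiring_1 fps) ^ n) $ k = of_nat (n choose k)"
proof (induction n arbitrary: k)
  case (Suc n)
  have "(1 + fps_X :: 'a fps) ^ Suc n = (1 + fps_X) ^ n + fps_X * (1 + fps_X) ^ n"
    by (simp add: algebra_simps)
  then show ?case
    using Suc by (cases k) (simp_all add: add.commute)
next
  case 0
  then show ?case
    by (cases k) simp_all
qed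

lemma one_plus_power_expansion:
  fixes z :: "'a::comm_semiring_1"
  obtains D where "(1 + z) ^ s = 1 + of_nat s * z + z ^ 2 * D"
proof (induction s arbitrary: thesis)
  case 0
  show ?case
    by (rule 0[of 0]) simp
next
  case (Suc s)
  then obtain D where "(1 + z) ^ s = 1 + of_nat s * z + z ^ 2 * D"
    by blast
  then have "(1 + z) ^ Suc s = 1 + of_nat (Suc s) * z + z ^ 2 * (of_nat s + D + z * D)"
    by (simp add: algebra_simps power2_eq_square)
  then show ?case
    by (rule Suc.prems)
qed

text \<open>A special case of Lucas' theorem, read off from the coefficient of X^q in
  (1 + X)^n = (1 + X)^r (1 + X^q)^s, where n = q s + r.\<close>
lemma of_nat_choose_CHAR_power:
  assumes "prime CHAR('a::comm_semiring_1)"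
  shows "(of_nat (n choose CHAR('a) ^ l) :: 'a) = of_nat (n div CHAR('a) ^ l)"
proof -
  define q where "q = CHAR('a) ^ l"
  have "q > 0"
    using assms by (simp add: q_def prime_gt_0_nat)
  define s r where "s = n div q" and "r = n mod q"
  have "r < q"
    using \<open>q > 0\<close> by (simp add: r_def)
  have n: "n = r + q * s"
    by (simp add: r_def s_def)
  obtain D where "(1 + fps_X ^ q :: 'a fps) ^ s = 1 + of_nat s * fps_X ^ q + (fps_X ^ q) ^ 2 * D"
    by (rule one_plus_power_expansion)
  then have D: "(1 + fps_X ^ q :: 'a fps) ^ s = 1 + fps_const (of_nat s) * fps_X ^ q + fps_X ^ (2 * q) * D"
    by (simp add: mult.commute fps_of_nat flip: power_mult)
  have frobenius: "(1 + fps_X :: 'a fps) ^ q = 1 + fps_X ^ q"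
    using assms by (subst freshmans_dream'[where n = l]) (simp_all add: q_def)
  have "(of_nat (n choose q) :: 'a) = ((1 + fps_X :: 'a fps) ^ n) $ q"
    by (simp add: fps_nth_one_plus_X_power)
  also have "(1 + fps_X :: 'a fps) ^ n = (1 + fps_X) ^ r * ((1 + fps_X) ^ q) ^ s"
    unfolding n by (simp add: power_add power_mult)
  also have "\<dots> = (1 + fps_X) ^ r + fps_const (of_nat s) * (fps_X ^ q * (1 + fps_X) ^ r)
      + fps_X ^ (2 * q) * ((1 + fps_X) ^ r * D)"
    unfolding frobenius D by (simp add: algebra_simps)
  also have "\<dots> $ q = of_nat s"
    using \<open>r < q\<close> \<open>q > 0\<close> by (simp add: fps_nth_one_plus_X_power fps_X_power_mult_nth binomial_eq_0)
  finally show ?thesis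
    by (simp add: q_def s_def)
qed

definition fps_hasse :: "nat \<Rightarrow> 'a::comm_semiring_1 fps \<Rightarrow> 'a fps" where
  "fps_hasse k f = Abs_fps (\<lambda>n. of_nat ((n + k) choose k) * f $ (n + k))"

lemma hasse_y_eq_fps_hasse: "hasse_y k F = fps_hasse k F"
  by (rule bcoeff_ext) (simp add: hasse_y_def fps_hasse_def bcoeff_def bivar_def flip: fps_of_nat)

lemma fps_hasse_X_power_mult:
  assumes "prime CHAR('a::comm_semiring_1)" and q: "q = CHAR('a) ^ l"
  shows "fps_hasse q (fps_X ^ q * g :: 'a fps) = fps_X ^ q * fps_hasse q g + g"
proof (rule fps_ext)
  fix n
  have "q > 0"
    using assms by (simp add: prime_gt_0_nat)
  have choose: "(of_nat (m choose q) :: 'a) = of_nat (m div q)" for m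
    using of_nat_choose_CHAR_power[OF assms(1)] q by simp
  show "fps_hasse q (fps_X ^ q * g) $ n = (fps_X ^ q * fps_hasse q g + g) $ n"
  proof (cases "n < q")
    case True
    then show ?thesis
      using \<open>q > 0\<close> by (simp add: fps_hasse_def fps_X_power_mult_nth choose)
  next
    case False
    then have "n - q + q = n" and "n div q = Suc ((n - q) div q)"
      using \<open>q > 0\<close> by (simp_all add: le_div_geq)
    with False show ?thesis
      using \<open>q > 0\<close> by (simp add: fps_hasse_def fps_X_power_mult_nth choose distrib_right add_ac)
  qed
qed

lemma fps_hasse_frobenius_mult:
  assumes "prime CHAR('a::comm_ring_1)" and "q = CHAR('a) ^ l"
  shows "fps_hasse q ((fps_X ^ q - fps_const c) * g :: 'a fps) = (fps_X ^ q - fps_const c) * fps_hasse q g + g"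
proof -
  have const_mult: "fps_hasse q (fps_const c * g) = fps_const c * fps_hasse q g"
    by (rule fps_ext) (simp add: fps_hasse_def algebra_simps)
  have diff: "fps_hasse q (f - h) = fps_hasse q f - fps_hasse q h" for f h :: "'a fps"
    by (rule fps_ext) (simp add: fps_hasse_def algebra_simps)
  have "fps_hasse q ((fps_X ^ q - fps_const c) * g) = fps_hasse q (fps_X ^ q * g) - fps_hasse q (fps_const c * g)"
    by (simp only: left_diff_distrib diff)
  also have "\<dots> = (fps_X ^ q - fps_const c) * fps_hasse q g + g"
    by (simp only: fps_hasse_X_power_mult[OF assms] const_mult) (simp add: algebra_simps)
  finally show ?thesis .
qed

lemma fps_hasse_frobenius_power_mult:
  fixes c :: "'a::comm_ring_1"
  assumes "prime CHAR('a)" and "q = CHAR('a) ^ l"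
  defines "A \<equiv> fps_X ^ q - fps_const c :: 'a fps"
  shows "fps_hasse q (A ^ Suc m * g) = A ^ Suc m * fps_hasse q g + of_nat (Suc m) * A ^ m * g"
proof (induction m)
  case 0
  then show ?case
    using fps_hasse_frobenius_mult[OF assms(1,2)] by (simp add: A_def)
next
  case (Suc m)
  have "fps_hasse q (A ^ Suc (Suc m) * g) = fps_hasse q (A * (A ^ Suc m * g))"
    by (simp add: mult.assoc)
  also have "\<dots> = A * fps_hasse q (A ^ Suc m * g) + A ^ Suc m * g"
    unfolding A_def by (rule fps_hasse_frobenius_mult[OF assms(1,2)])
  also have "\<dots> = A * (A ^ Suc m * fps_hasse q g + of_nat (Suc m) * A ^ m * g) + A ^ Suc m * g"
    by (simp only: Suc.IH)
  also have "\<dots> = A ^ Suc (Suc m) * fps_hasse q g + of_nat (Suc (Suc m)) * A ^ Suc m * g"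
    by (simp add: algebra_simps)
  finally show ?case .
qed

lemma of_nat_neq_0_if_coprime_CHAR:
  assumes "coprime CHAR('a::field) e"
  shows "(of_nat e :: 'a) \<noteq> 0"
proof
  assume "(of_nat e :: 'a) = 0"
  then have "CHAR('a) dvd e"
    by (simp add: of_nat_eq_0_iff_char_dvd)
  with assms have "CHAR('a) = 1"
    by (simp add: coprime_absorb_left)
  then show False
    by simp
qed

text \<open>With R = Z/A, V = 1/U and k = e this reads
  Z (A^e H + e A^(e-1) U) / (e A^e U) = Z/A + Z H / (e U).\<close>
lemma logarithmic_derivative_quotient:
  fixes A R Z U V E H k :: "'a::comm_ring_1"
  assumes "A * R = Z" and "U * V = 1" and "k * E = 1"
  shows "k * (A ^ Suc m * U) * (R + Z * (H * V * E)) = Z * (A ^ Suc m * H + k * A ^ m * U)"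
proof -
  have "k * (A ^ Suc m * U) * (R + Z * (H * V * E))
      = k * A ^ m * U * (A * R) + Z * A ^ Suc m * H * ((U * V) * (k * E))"
    by (simp add: distrib_left mult_ac)
  also have "\<dots> = Z * (A ^ Suc m * H + k * A ^ m * U)"
    by (simp only: assms) (simp add: distrib_left mult_ac)
  finally show ?thesis .
qed

lemma subst_ty_X_power_diff_const:
  "subst_ty (fps_X ^ q - fps_const c :: 'a::comm_ring_1 fps fps) = fps_X ^ q - subst_ty (fps_const c)"
  by (simp add: subst_ty_diff subst_ty_power subst_ty_X)

lemma subst_hasse_quotient:
  fixes Q Q' R E :: "'a::comm_ring_1 fps fps"
  assumes "prime CHAR('a)" and q: "q = CHAR('a) ^ l"
    and R: "(fps_X ^ q - subst_ty (fps_const c)) * R = Z" and Q': "Q * Q' = 1"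
    and E: "of_nat (Suc m) * E = 1"
  defines "P \<equiv> (fps_X ^ q - fps_const c) ^ Suc m * Q"
  shows "of_nat (Suc m) * subst_ty P * (R + Z * subst_ty (hasse_y q Q * Q' * E)) = Z * subst_ty (hasse_y q P)"
proof -
  define A where "A = fps_X ^ q - subst_ty (fps_const c)"
  have hasse_P: "hasse_y q P = (fps_X ^ q - fps_const c) ^ Suc m * hasse_y q Q
      + of_nat (Suc m) * (fps_X ^ q - fps_const c) ^ m * Q"
    unfolding P_def hasse_y_eq_fps_hasse
    by (rule fps_hasse_frobenius_power_mult) (use assms(1) q in simp_all)
  have "subst_ty Q * subst_ty Q' = 1"
    by (simp add: Q' subst_ty_one flip: subst_ty_mult)
  moreover have "of_nat (Suc m) * subst_ty E = 1"
    using arg_cong[OF E, of subst_ty] by (simp only: subst_ty_one subst_ty_mult subst_ty_of_nat)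
  moreover note R[folded A_def]
  ultimately have "of_nat (Suc m) * (A ^ Suc m * subst_ty Q)
        * (R + Z * (subst_ty (hasse_y q Q) * subst_ty Q' * subst_ty E))
      = Z * (A ^ Suc m * subst_ty (hasse_y q Q) + of_nat (Suc m) * A ^ m * subst_ty Q)"
    by (intro logarithmic_derivative_quotient)
  then show ?thesis
    unfolding hasse_P by (simp only: P_def A_def subst_ty_add subst_ty_mult subst_ty_power subst_ty_of_nat
        subst_ty_X_power_diff_const)
qed

theorem theoremA3:
  fixes P Q :: "'a::field fps fps" and \<phi> :: "'a fps" and l e :: nat
  defines "p \<equiv> CHAR('a)"
  assumes char_pos: "p > 0"
    and e_pos: "e \<ge> 1"
    and coprime: "coprime p e"
    and factor: "P = (fps_X - fps_const \<phi>) ^ (p ^ l * e) * Q"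
    and phi0: "fps_nth \<phi> 0 = 0"
    and Q00: "bcoeff Q 0 0 \<noteq> 0"
  shows "(\<exists>R. of_nat e * subst_ty P * R = fps_X ^ (2 * p ^ l) * subst_ty (hasse_y (p ^ l) P))
       \<and> (\<forall>R. of_nat e * subst_ty P * R = fps_X ^ (2 * p ^ l) * subst_ty (hasse_y (p ^ l) P)
              \<longrightarrow> \<phi> ^ (p ^ l) = diag R)"
proof -
  have prime: "prime CHAR('a)"
    using char_pos prime_CHAR_semidom unfolding p_def by blast
  define q where "q = p ^ l"
  have q: "q = CHAR('a) ^ l" and "q > 0"
    using prime by (simp_all add: q_def p_def prime_gt_0_nat)
  obtain m where m: "e = Suc m"
    using e_pos by (cases e) auto
  have e: "(of_nat e :: 'a) \<noteq> 0"
    using coprime of_nat_neq_0_if_coprime_CHAR unfolding p_def by blast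
  have frobenius: "(fps_X - fps_const \<phi>) ^ q = fps_X ^ q - fps_const (\<phi> ^ q)"
    using prime q by (simp add: freshmans_dream_diff)
  have P: "P = (fps_X ^ q - fps_const (\<phi> ^ q)) ^ Suc m * Q"
    unfolding factor m by (simp only: power_mult frobenius flip: q_def)
  obtain R1 where R1: "(fps_X ^ q - subst_ty (fps_const (\<phi> ^ q))) * R1 = fps_X ^ (2 * q)"
    and "diag R1 = \<phi> ^ q"
    using \<open>q > 0\<close> phi0 by (rule diag_root_quotient)
  obtain Q' where "Q * Q' = 1"
    using Q00 by (rule bivariate_right_inverse)
  define E :: "'a fps fps" where "E = fps_const (fps_const (inverse (of_nat e)))"
  have "of_nat (Suc m) * E = 1"
    using e by (simp add: E_def m flip: fps_of_nat)
  define R0 where "R0 = R1 + fps_X ^ (2 * q) * subst_ty (hasse_y q Q * Q' * E)"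
  have eq: "of_nat e * subst_ty P * R0 = fps_X ^ (2 * q) * subst_ty (hasse_y q P)"
    unfolding R0_def P m by (rule subst_hasse_quotient[OF prime q R1 \<open>Q * Q' = 1\<close> \<open>of_nat (Suc m) * E = 1\<close>])
  have "diag R0 = \<phi> ^ q"
    using \<open>diag R1 = \<phi> ^ q\<close> \<open>q > 0\<close> by (simp add: R0_def diag_add diag_X_power_mult_subst_ty)
  moreover have "of_nat e * subst_ty P \<noteq> 0"
  proof -
    have "(fps_X - fps_const \<phi> :: 'a fps fps) \<noteq> 0"
      using arg_cong[of "fps_X - fps_const \<phi>" 0 "\<lambda>F. F $ 1"] by auto
    moreover have "Q \<noteq> 0"
      using Q00 by auto
    ultimately show ?thesis
      using e by (simp add: factor subst_ty_eq_0_iff flip: fps_of_nat)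
  qed
  ultimately show ?thesis
    using eq unfolding q_def by (metis mult_left_cancel)
qed

end
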